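(* Let $d_{21}$ be the 3-dimensional complex associative algebra with basis $\{e_1,e_2,e_3\}$ and nonzero products $e_1e_1=e_3$, $e_1e_2=e_3$, $e_2e_1=-e_3$. For every Hermitian inner product $\langle\cdot,\cdot\rangle$ on $d_{21}$ there exist $k>0$, $a>0$ and an automorphism $\phi$ of $d_{21}$ such that $\{a\phi e_1,\phi e_2,\phi e_3\}$ is an orthonormal basis with respect to $k\langle\cdot,\cdot\rangle$.
   Context: An automorphism of an algebra is an invertible linear map $\phi$ with $\phi(xy)=\phi(x)\phi(y)$. All products of basis vectors of $d_{21}$ not listed are zero. *)

theory Defs
  imports "HOL-Analysis.Analysis"
begin

text \<open>The algebra d21 is modelled on complex^3: x = x$1 e1 + x$2 e2 + x$3 e3,
  where e_i = axis i 1.  Products: e1 e1 = e3, e1 e2 = e3, e2 e1 = -e3, all others zero.\<close>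

definition d21_basis :: "3 \<Rightarrow> complex ^ 3" where
  "d21_basis i = axis i 1"

definition d21_mult :: "complex ^ 3 \<Rightarrow> complex ^ 3 \<Rightarrow> complex ^ 3" where
  "d21_mult x y = (\<chi> i. if i = 3 then x$1 * y$1 + x$1 * y$2 - x$2 * y$1 else 0)"

definition hermitian_inner :: "(complex ^ 3 \<Rightarrow> complex ^ 3 \<Rightarrow> complex) \<Rightarrow> bool" where
  "hermitian_inner h \<longleftrightarrow>
     (\<forall>x y z. h (x + y) z = h x z + h y z) \<and>
     (\<forall>c x y. h (c *s x) y = c * h x y) \<and>
     (\<forall>x y. h y x = cnj (h x y)) \<and>
     (\<forall>x. x \<noteq> 0 \<longrightarrow> Im (h x x) = 0 \<and> Re (h x x) > 0)"

definition d21_automorphism :: "(complex ^ 3 \<Rightarrow> complex ^ 3) \<Rightarrow> bool" where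
  "d21_automorphism \<phi> \<longleftrightarrow>
     (\<forall>x y. \<phi> (x + y) = \<phi> x + \<phi> y) \<and>
     (\<forall>c x. \<phi> (c *s x) = c *s \<phi> x) \<and>
     bij \<phi> \<and>
     (\<forall>x y. \<phi> (d21_mult x y) = d21_mult (\<phi> x) (\<phi> y))"

definition orthonormal_basis3 ::
  "(complex ^ 3 \<Rightarrow> complex ^ 3 \<Rightarrow> complex) \<Rightarrow> (3 \<Rightarrow> complex ^ 3) \<Rightarrow> bool" where
  "orthonormal_basis3 g v \<longleftrightarrow>
     (\<forall>i j. g (v i) (v j) = (if i = j then 1 else 0)) \<and>
     (\<forall>x. \<exists>c :: 3 \<Rightarrow> complex. x = (\<Sum>i\<in>UNIV. c i *s v i))"

end

theory Submission
  imports Defs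
begin

text \<open>Gram--Schmidt applied to \<open>e\<^sub>3, e\<^sub>2, e\<^sub>1\<close> (in this order) yields an orthogonal basis
  \<open>u\<^sub>1 = e\<^sub>1 + \<beta> e\<^sub>2 + \<gamma> e\<^sub>3\<close>, \<open>u\<^sub>2 = e\<^sub>2 + \<alpha> e\<^sub>3\<close>, \<open>u\<^sub>3 = e\<^sub>3\<close>. Because the product of \<open>d\<^sub>2\<^sub>1\<close> only
  sees the \<open>e\<^sub>1, e\<^sub>2\<close> coordinates and lands in \<open>e\<^sub>3\<close>, every unitriangular change of basis
  of this shape, followed by the grading \<open>e\<^sub>1, e\<^sub>2 \<mapsto> p e\<^sub>1, p e\<^sub>2\<close>, \<open>e\<^sub>3 \<mapsto> p\<^sup>2 e\<^sub>3\<close>, is an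
  automorphism. Choosing \<open>p > 0\<close> with \<open>p\<^sup>2 |u\<^sub>2|\<^sup>2 = p\<^sup>4 |u\<^sub>3|\<^sup>2\<close> makes the images of \<open>e\<^sub>2, e\<^sub>3\<close>
  of equal length; the global factor \<open>k\<close> normalises them and \<open>a\<close> normalises the image of \<open>e\<^sub>1\<close>.\<close>

lemma vec3_eq_iff: "(x::'a^3) = y \<longleftrightarrow> x$1 = y$1 \<and> x$2 = y$2 \<and> x$3 = y$3"
  by (simp add: vec_eq_iff forall_3)

lemma d21_basis_nth: "d21_basis i $ j = (if j = i then 1 else 0)"
  by (simp add: d21_basis_def axis_def)

lemma d21_automorphism_basis_nonzero:
  assumes "d21_automorphism \<phi>"
  shows "\<phi> (d21_basis i) \<noteq> 0"
proof -
  have scale: "\<And>c x. \<phi> (c *s x) = c *s \<phi> x" and "inj \<phi>"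
    using assms unfolding d21_automorphism_def by (auto simp: bij_is_inj)
  have "\<phi> 0 = 0"
    using scale[of 0 0] by simp
  moreover have "d21_basis i \<noteq> 0"
    by (simp add: d21_basis_def)
  ultimately show ?thesis
    using \<open>inj \<phi>\<close> by (metis injD)
qed

lemma d21_automorphism_unitriangular:
  fixes p \<alpha> \<beta> \<gamma> :: complex
  assumes p: "p \<noteq> 0"
  obtains \<phi> where "d21_automorphism \<phi>"
    "\<phi> (d21_basis 1) = p *s (d21_basis 1 + \<beta> *s d21_basis 2 + \<gamma> *s d21_basis 3)"
    "\<phi> (d21_basis 2) = p *s (d21_basis 2 + \<alpha> *s d21_basis 3)"
    "\<phi> (d21_basis 3) = p\<^sup>2 *s d21_basis 3"
proof
  define \<phi> :: "complex^3 \<Rightarrow> complex^3" where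
    "\<phi> x = vector [p * x$1, p * (\<beta> * x$1 + x$2), p * (\<gamma> * x$1 + \<alpha> * x$2) + p\<^sup>2 * x$3]" for x
  define \<psi> :: "complex^3 \<Rightarrow> complex^3" where
    "\<psi> y = vector [y$1 / p, y$2 / p - \<beta> * y$1 / p,
       (y$3 - \<gamma> * y$1 - \<alpha> * (y$2 - \<beta> * y$1)) / p\<^sup>2]" for y
  have "\<phi> \<circ> \<psi> = id" "\<psi> \<circ> \<phi> = id"
    using p by (auto simp: fun_eq_iff vec3_eq_iff \<phi>_def \<psi>_def vector_3 field_simps power2_eq_square)
  then have "bij \<phi>"
    using o_bij by blast
  then show "d21_automorphism \<phi>"
    unfolding d21_automorphism_def
    by (simp add: vec3_eq_iff \<phi>_def d21_mult_def vector_3 algebra_simps power2_eq_square)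
  show "\<phi> (d21_basis 1) = p *s (d21_basis 1 + \<beta> *s d21_basis 2 + \<gamma> *s d21_basis 3)"
    "\<phi> (d21_basis 2) = p *s (d21_basis 2 + \<alpha> *s d21_basis 3)"
    "\<phi> (d21_basis 3) = p\<^sup>2 *s d21_basis 3"
    by (simp_all add: vec3_eq_iff \<phi>_def vector_3 d21_basis_nth)
qed

lemma additive_homogeneous_surj_basis_images_span:
  fixes \<phi> :: "complex^3 \<Rightarrow> complex^3"
  assumes add: "\<And>x y. \<phi> (x + y) = \<phi> x + \<phi> y" and scale: "\<And>c x. \<phi> (c *s x) = c *s \<phi> x"
    and "surj \<phi>"
  shows "\<exists>c. x = (\<Sum>i\<in>UNIV. c i *s \<phi> (d21_basis i))"
proof -
  obtain y where "x = \<phi> y"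
    using \<open>surj \<phi>\<close> by blast
  also have "y = y$1 *s d21_basis 1 + y$2 *s d21_basis 2 + y$3 *s d21_basis 3"
    by (simp add: vec3_eq_iff d21_basis_nth)
  also have "\<phi> \<dots> = (\<Sum>i\<in>UNIV. y$i *s \<phi> (d21_basis i))"
    by (simp add: add scale sum_3)
  finally have "x = (\<Sum>i\<in>UNIV. y$i *s \<phi> (d21_basis i))" .
  then show ?thesis
    by (rule exI[of _ "\<lambda>i. y$i"])
qed

context
  fixes h :: "complex ^ 3 \<Rightarrow> complex ^ 3 \<Rightarrow> complex"
  assumes herm: "hermitian_inner h"
begin

lemma hermitian_inner_add_left: "h (x + y) z = h x z + h y z"
  and hermitian_inner_scale_left: "h (c *s x) y = c * h x y"
  and hermitian_inner_cnj_commute: "h y x = cnj (h x y)"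
  using herm unfolding hermitian_inner_def by blast+

lemma hermitian_inner_diff_left: "h (x - y) z = h x z - h y z"
  by (metis hermitian_inner_add_left eq_diff_eq)

lemma hermitian_inner_scale_right: "h x (c *s y) = cnj c * h x y"
  by (metis hermitian_inner_scale_left hermitian_inner_cnj_commute complex_cnj_mult)

lemma hermitian_inner_self_real: "h x x = of_real (Re (h x x))"
  using hermitian_inner_cnj_commute[of x x] by (simp add: complex_eq_iff)

lemma hermitian_inner_self_pos: "x \<noteq> 0 \<Longrightarrow> Re (h x x) > 0"
  using herm unfolding hermitian_inner_def by blast

lemma hermitian_inner_self_nonzero: "x \<noteq> 0 \<Longrightarrow> h x x \<noteq> 0"
  using hermitian_inner_self_pos by fastforce

lemma hermitian_inner_self_scale_real: "Re (h (of_real s *s x) (of_real s *s x)) = s\<^sup>2 * Re (h x x)"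
  by (simp add: hermitian_inner_scale_left hermitian_inner_scale_right power2_eq_square)

lemma hermitian_inner_orthogonal_sym: "h x y = 0 \<Longrightarrow> h y x = 0"
  by (simp add: hermitian_inner_cnj_commute[of x y])

lemma hermitian_inner_project_away:
  assumes "h y y \<noteq> 0" "h y z = 0"
  shows "h (x - (h x y / h y y) *s y - (h x z / h z z) *s z) y = 0"
proof -
  have "h z y = 0"
    using assms(2) by (rule hermitian_inner_orthogonal_sym)
  then show ?thesis
    using assms(1) by (simp add: hermitian_inner_diff_left hermitian_inner_scale_left)
qed

text \<open>Two steps of Gram--Schmidt; \<open>\<gamma>\<close> absorbs the \<open>\<beta> \<alpha> z\<close> hidden in \<open>\<beta> (y + \<alpha> z)\<close>.\<close>

lemma hermitian_inner_gram_schmidt3: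
  assumes "z \<noteq> 0" and "\<And>\<alpha>. y + \<alpha> *s z \<noteq> 0"
  obtains \<alpha> \<beta> \<gamma> where "h (y + \<alpha> *s z) z = 0"
    "h (x + \<beta> *s y + \<gamma> *s z) z = 0" "h (x + \<beta> *s y + \<gamma> *s z) (y + \<alpha> *s z) = 0"
proof -
  define \<alpha> where "\<alpha> = - (h y z / h z z)"
  define u where "u = y + \<alpha> *s z"
  define \<beta> where "\<beta> = - (h x u / h u u)"
  define \<gamma> where "\<gamma> = \<beta> * \<alpha> - h x z / h z z"
  have z: "h z z \<noteq> 0" and u: "h u u \<noteq> 0"
    using assms by (simp_all add: u_def hermitian_inner_self_nonzero)
  have uz: "h u z = 0"
    using z by (simp add: u_def \<alpha>_def hermitian_inner_diff_left hermitian_inner_scale_left)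
  have w: "x + \<beta> *s y + \<gamma> *s z = x - (h x u / h u u) *s u - (h x z / h z z) *s z"
    by (simp add: vec3_eq_iff u_def \<beta>_def \<gamma>_def algebra_simps)
  show ?thesis
  proof
    show "h (y + \<alpha> *s z) z = 0" using uz by (simp add: u_def)
    show "h (x + \<beta> *s y + \<gamma> *s z) (y + \<alpha> *s z) = 0"
      unfolding w u_def[symmetric] using hermitian_inner_project_away[OF u uz] .
    show "h (x + \<beta> *s y + \<gamma> *s z) z = 0"
      using hermitian_inner_project_away[OF z hermitian_inner_orthogonal_sym[OF uz], of x]
      unfolding w by (simp add: diff_diff_eq add.commute)
  qed
qed

lemma orthonormal_basis3_rescale:
  fixes w :: "3 \<Rightarrow> complex^3" and r :: "3 \<Rightarrow> real"
  assumes orth: "\<And>i j. i \<noteq> j \<Longrightarrow> h (w i) (w j) = 0"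
    and norm: "\<And>i. k * (r i)\<^sup>2 * Re (h (w i) (w i)) = 1"
    and span: "\<And>x. \<exists>c. x = (\<Sum>i\<in>UNIV. c i *s w i)"
  shows "orthonormal_basis3 (\<lambda>x y. of_real k * h x y) (\<lambda>i. of_real (r i) *s w i)"
  unfolding orthonormal_basis3_def
proof (intro conjI allI)
  fix i j
  show "of_real k * h (of_real (r i) *s w i) (of_real (r j) *s w j) = (if i = j then 1 else 0)"
  proof (cases "i = j")
    case True
    have "of_real k * h (of_real (r i) *s w i) (of_real (r i) *s w i)
        = of_real (k * (r i)\<^sup>2 * Re (h (w i) (w i)))"
      by (subst hermitian_inner_self_real)
        (simp add: hermitian_inner_scale_left hermitian_inner_scale_right power2_eq_square)
    also have "\<dots> = 1"
      using norm by simp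
    finally show ?thesis
      using True by simp
  next
    case False
    then show ?thesis
      by (simp add: orth hermitian_inner_scale_left hermitian_inner_scale_right)
  qed
next
  fix x
  obtain c where x: "x = (\<Sum>i\<in>UNIV. c i *s w i)"
    using span by blast
  have "r i \<noteq> 0" for i
    using norm[of i] by auto
  then have "x = (\<Sum>i\<in>UNIV. (c i / of_real (r i)) *s (of_real (r i) *s w i))"
    by (simp add: x)
  then show "\<exists>c. x = (\<Sum>i\<in>UNIV. c i *s (of_real (r i) *s w i))"
    by (rule exI[of _ "\<lambda>i. c i / of_real (r i)"])
qed

lemma d21_automorphism_orthogonalizing:
  obtains \<phi> where "d21_automorphism \<phi>"
    "\<And>i j. i \<noteq> j \<Longrightarrow> h (\<phi> (d21_basis i)) (\<phi> (d21_basis j)) = 0"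
    "Re (h (\<phi> (d21_basis 2)) (\<phi> (d21_basis 2)))
      = Re (h (\<phi> (d21_basis 3)) (\<phi> (d21_basis 3)))"
proof -
  let ?e = d21_basis
  have "?e 3 \<noteq> 0" "\<And>\<alpha>. ?e 2 + \<alpha> *s ?e 3 \<noteq> 0"
    by (simp_all add: vec3_eq_iff d21_basis_nth)
  then obtain \<alpha> \<beta> \<gamma> where orth: "h (?e 2 + \<alpha> *s ?e 3) (?e 3) = 0"
      "h (?e 1 + \<beta> *s ?e 2 + \<gamma> *s ?e 3) (?e 3) = 0"
      "h (?e 1 + \<beta> *s ?e 2 + \<gamma> *s ?e 3) (?e 2 + \<alpha> *s ?e 3) = 0"
    by (rule hermitian_inner_gram_schmidt3)
  define u where "u i = (if i = 1 then ?e 1 + \<beta> *s ?e 2 + \<gamma> *s ?e 3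
    else if i = 2 then ?e 2 + \<alpha> *s ?e 3 else ?e 3)" for i :: 3
  have u_orth: "h (u i) (u j) = 0" if "i \<noteq> j" for i j
  proof -
    have "h (u 2) (u 3) = 0" "h (u 1) (u 3) = 0" "h (u 1) (u 2) = 0"
      using orth by (simp_all add: u_def)
    then show ?thesis
      using that exhaust_3[of i] exhaust_3[of j] by (auto dest: hermitian_inner_orthogonal_sym)
  qed
  define n where "n i = Re (h (u i) (u i))" for i
  have "n 2 > 0" "n 3 > 0"
    unfolding n_def
    by (auto intro!: hermitian_inner_self_pos simp: u_def vec3_eq_iff d21_basis_nth)
  define p where "p = sqrt (n 2 / n 3)"
  define q where "q i = (if i = 3 then p\<^sup>2 else p)" for i :: 3
  have p2: "p\<^sup>2 = n 2 / n 3"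
    using \<open>n 2 > 0\<close> \<open>n 3 > 0\<close> by (simp add: p_def)
  have "complex_of_real p \<noteq> 0"
    using \<open>n 2 > 0\<close> \<open>n 3 > 0\<close> by (simp add: p_def)
  then obtain \<phi> where "d21_automorphism \<phi>" and \<phi>_basis:
      "\<phi> (?e 1) = of_real p *s (?e 1 + \<beta> *s ?e 2 + \<gamma> *s ?e 3)"
      "\<phi> (?e 2) = of_real p *s (?e 2 + \<alpha> *s ?e 3)" "\<phi> (?e 3) = (of_real p)\<^sup>2 *s ?e 3"
    by (rule d21_automorphism_unitriangular)
  have \<phi>: "\<phi> (?e i) = of_real (q i) *s u i" for i
    using exhaust_3[of i] by (auto simp: \<phi>_basis q_def u_def)
  show ?thesis
  proof
    show "d21_automorphism \<phi>" by fact
    show "h (\<phi> (?e i)) (\<phi> (?e j)) = 0" if "i \<noteq> j" for i j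
      using u_orth[OF that] by (simp add: \<phi> hermitian_inner_scale_left hermitian_inner_scale_right)
    have "(p\<^sup>2)\<^sup>2 * n 3 = p\<^sup>2 * n 2"
      unfolding p2 using \<open>n 3 > 0\<close> by (simp add: power2_eq_square)
    then show "Re (h (\<phi> (?e 2)) (\<phi> (?e 2))) = Re (h (\<phi> (?e 3)) (\<phi> (?e 3)))"
      unfolding \<phi> hermitian_inner_self_scale_real n_def[symmetric] by (simp add: q_def)
  qed
qed

end

theorem lemma5p1:
  fixes h :: "complex ^ 3 \<Rightarrow> complex ^ 3 \<Rightarrow> complex"
  assumes "hermitian_inner h"
  shows "\<exists>(k::real) (a::real) \<phi>. k > 0 \<and> a > 0 \<and> d21_automorphism \<phi> \<and>
           orthonormal_basis3 (\<lambda>x y. complex_of_real k * h x y)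
             (\<lambda>i. if i = 1 then complex_of_real a *s \<phi> (d21_basis 1) else \<phi> (d21_basis i))"
proof -
  obtain \<phi> where aut: "d21_automorphism \<phi>"
    and orth: "\<And>i j. i \<noteq> j \<Longrightarrow> h (\<phi> (d21_basis i)) (\<phi> (d21_basis j)) = 0"
    and same_length: "Re (h (\<phi> (d21_basis 2)) (\<phi> (d21_basis 2)))
      = Re (h (\<phi> (d21_basis 3)) (\<phi> (d21_basis 3)))"
    using d21_automorphism_orthogonalizing[OF assms] by blast
  define n where "n i = Re (h (\<phi> (d21_basis i)) (\<phi> (d21_basis i)))" for i
  have n_pos: "n i > 0" for i
    unfolding n_def using aut
    by (intro hermitian_inner_self_pos[OF assms] d21_automorphism_basis_nonzero)
  define k where "k = 1 / n 2"
  define a where "a = sqrt (n 2 / n 1)"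
  have "orthonormal_basis3 (\<lambda>x y. of_real k * h x y)
      (\<lambda>i. of_real (if i = 1 then a else 1) *s \<phi> (d21_basis i))"
  proof (rule orthonormal_basis3_rescale[OF assms orth])
    show "k * (if i = 1 then a else 1)\<^sup>2 * Re (h (\<phi> (d21_basis i)) (\<phi> (d21_basis i))) = 1" for i
      using exhaust_3[of i] n_pos[of 1] n_pos[of 2] same_length
      by (auto simp: k_def a_def n_def[symmetric])
    show "\<exists>c. x = (\<Sum>i\<in>UNIV. c i *s \<phi> (d21_basis i))" for x
      using aut unfolding d21_automorphism_def
      by (intro additive_homogeneous_surj_basis_images_span) (auto dest: bij_is_surj)
  qed
  moreover have "(\<lambda>i. of_real (if i = 1 then a else 1) *s \<phi> (d21_basis i))
      = (\<lambda>i. if i = 1 then of_real a *s \<phi> (d21_basis 1) else \<phi> (d21_basis i))"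
    by (simp add: fun_eq_iff)
  moreover have "k > 0" "a > 0"
    using n_pos[of 1] n_pos[of 2] by (simp_all add: k_def a_def)
  ultimately show ?thesis
    using aut by auto
qed

end
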